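(* Suppose $f\colon[0,\infty)\to[0,\infty)$ satisfies (M), (S) and (L). For $k>0$ set $g(\sigma)=F^{-1}(\sigma^k)$ for $\sigma\in(0,F_0^{1/k})$. Then there exists $\sigma_*>0$ such that $g$ is convex on $(0,\sigma_* )$.
   Context: (M) $f$ continuous, nondecreasing, $f(u)>0$ for $u>0$. (S) there is $\tau_0>0$ with $f\in C^1([\tau_0,\infty))$ and $\int_{\tau_0}^\infty ds/f(s)<\infty$. $F(u)=\int_u^\infty ds/f(s)$ for $u>0$, $F_0=\lim_{u\to0}F(u)$ (possibly $\infty$); $F^{-1}\colon(0,F_0)\to(0,\infty)$ is the inverse of $F$. (L) $q_f:=\lim_{u\to\infty}f'(u)F(u)$ exists and is finite. *)

theory Defs
  imports "HOL-Analysis.Analysis"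
begin

text \<open>F(u) = integral from u to infinity of 1/f (improper integral; the integrand is
positive, so Henstock-Kurzweil integrability on {u..} is convergence of the improper integral).\<close>
definition Fint :: "(real \<Rightarrow> real) \<Rightarrow> real \<Rightarrow> real" where
  "Fint f u = integral {u..} (\<lambda>s. 1 / f s)"

definition F0 :: "(real \<Rightarrow> real) \<Rightarrow> ereal" where
  "F0 f = Lim (at_right 0) (\<lambda>u. ereal (Fint f u))"

definition Finv :: "(real \<Rightarrow> real) \<Rightarrow> real \<Rightarrow> real" where
  "Finv f = inv_into {0<..} (Fint f)"

end

theory Submission
  imports Defs
begin

text \<open>Write G for the inverse of F, so that G' = -f(G) on (0, F(T)) for every T > 0. By the chain
rule g'(\<sigma>) = -k \<psi>(g(\<sigma>)) with \<psi> = F^((k-1)/k) f, and g is decreasing, so g is convex near 0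
as soon as \<psi> is nondecreasing on some [T, \<infinity>). Now \<psi>' = F^((k-1)/k - 1) (f' F - (k-1)/k), and
f' F tends to q \<ge> 1 > (k-1)/k: if q < 1 and q < c < 1, then (F f)' = f' F - 1 < c - 1 eventually,
so F f + (1 - c) u would be eventually nonincreasing although it is positive and unbounded.\<close>

lemma integrable_on_Ici_extend_nonneg:
  fixes h :: "real \<Rightarrow> real"
  assumes int: "h integrable_on {b..}" and nonneg: "\<And>x. x \<ge> b \<Longrightarrow> 0 \<le> h x"
    and cont: "continuous_on {a..b} h"
  shows "h integrable_on {a..}"
proof (cases "a \<le> b")
  case True
  have "h integrable_on ({a..b} \<union> {b..})"
    using True int integrable_continuous_interval[OF cont] by (intro integrable_Un) auto
  moreover have "{a..b} \<union> {b..} = {a..}" using True by auto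
  ultimately show ?thesis by simp
next
  case False
  have "h absolutely_integrable_on {b..}"
    using int nonneg by (intro nonnegative_absolutely_integrable_1) auto
  then have "h absolutely_integrable_on {a..}"
    by (rule set_integrable_subset) (use False in auto)
  then show ?thesis using absolutely_integrable_on_def by blast
qed

lemma integral_Ici_split:
  fixes h :: "real \<Rightarrow> real"
  assumes "a \<le> b" "h integrable_on {a..b}" "h integrable_on {b..}"
  shows "integral {a..} h = integral {a..b} h + integral {b..} h"
proof -
  have "(h has_integral (integral {a..b} h + integral {b..} h)) ({a..b} \<union> {b..})"
    using assms by (intro has_integral_Un) auto
  moreover have "{a..b} \<union> {b..} = {a..}" using assms(1) by auto
  ultimately show ?thesis by (simp add: integral_unique)
qed

lemma tendsto_integral_Ici_at_top:
  fixes h :: "real \<Rightarrow> real"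
  assumes int: "h absolutely_integrable_on {a..}"
  shows "((\<lambda>u. integral {u..} h) \<longlongrightarrow> 0) at_top"
proof (rule tendsto_at_topI_sequentially)
  fix X :: "nat \<Rightarrow> real" assume X: "filterlim X at_top sequentially"
  define g where "g n = (\<lambda>x. if x \<in> {X n..} then h x else 0)" for n
  have "(\<lambda>n. integral {a..} (g n)) \<longlonglongrightarrow> integral {a..} (\<lambda>x. 0)"
  proof (rule dominated_convergence(2))
    show "g n integrable_on {a..}" for n
    proof -
      have "h absolutely_integrable_on {X n..} \<inter> {a..}"
        by (rule set_integrable_subset[OF int]) auto
      then show ?thesis
        unfolding g_def integrable_restrict_Int absolutely_integrable_on_def by blast
    qed
    show "(\<lambda>x. norm (h x)) integrable_on {a..}"
      using int absolutely_integrable_on_def by blast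
    show "norm (g n x) \<le> norm (h x)" for n x by (simp add: g_def)
    show "(\<lambda>n. g n x) \<longlonglongrightarrow> 0" for x
    proof (rule tendsto_eventually)
      show "\<forall>\<^sub>F n in sequentially. g n x = 0"
        using filterlim_at_top_dense[THEN iffD1, OF X, rule_format, of x]
        by eventually_elim (simp add: g_def)
    qed
  qed
  moreover have "\<forall>\<^sub>F n in sequentially. integral {a..} (g n) = integral {X n..} h"
    using filterlim_at_top[THEN iffD1, OF X, rule_format, of a]
  proof eventually_elim
    case (elim n)
    then have "{X n..} \<inter> {a..} = {X n..}" by auto
    then show ?case unfolding g_def integral_restrict_Int by simp
  qed
  ultimately show "(\<lambda>n. integral {X n..} h) \<longlonglongrightarrow> 0"
    using Lim_transform_eventually by force
qed

lemma tendsto_SUP_at_right_antimono: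
  fixes g :: "real \<Rightarrow> real"
  assumes antimono: "\<And>x y. a < x \<Longrightarrow> x \<le> y \<Longrightarrow> g y \<le> g x"
  shows "((\<lambda>u. ereal (g u)) \<longlongrightarrow> (SUP u\<in>{a<..}. ereal (g u))) (at_right a)"
proof (rule order_tendstoI)
  fix l assume "l < (SUP u\<in>{a<..}. ereal (g u))"
  then obtain u0 where u0: "a < u0" "l < ereal (g u0)"
    unfolding less_SUP_iff by auto
  show "\<forall>\<^sub>F u in at_right a. l < ereal (g u)"
    unfolding eventually_at_right_field
  proof (intro exI[of _ u0] conjI allI impI)
    fix u assume "a < u" "u < u0"
    then have "g u0 \<le> g u" using antimono by simp
    then show "l < ereal (g u)" using u0(2) by (simp add: order_less_le_trans)
  qed (use u0 in auto)
next
  fix l assume "(SUP u\<in>{a<..}. ereal (g u)) < l"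
  moreover have "ereal (g u) \<le> (SUP u\<in>{a<..}. ereal (g u))" if "a < u" for u
    using that by (intro SUP_upper) simp
  ultimately show "\<forall>\<^sub>F u in at_right a. ereal (g u) < l"
    by (intro eventually_at_rightI[of a "a + 1"]) (auto intro: le_less_trans)
qed

locale reciprocal_integrable =
  fixes f :: "real \<Rightarrow> real"
  assumes continuous: "continuous_on {0<..} f"
    and pos: "\<And>u. 0 < u \<Longrightarrow> 0 < f u"
    and integrable_tail: "\<exists>\<tau>>0. (\<lambda>s. 1 / f s) integrable_on {\<tau>..}"
begin

lemma continuous_on_reciprocal:
  assumes "0 < a"
  shows "continuous_on {a..b} (\<lambda>s. 1 / f s)"
proof -
  have "f s \<noteq> 0" if "s \<in> {a..b}" for s
    using that assms pos[of s] by simp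
  with assms show ?thesis
    by (intro continuous_intros continuous_on_subset[OF continuous]) auto
qed

lemma integrable_reciprocal_Ici:
  assumes "0 < u"
  shows "(\<lambda>s. 1 / f s) integrable_on {u..}"
proof -
  obtain \<tau> where \<tau>: "0 < \<tau>" "(\<lambda>s. 1 / f s) integrable_on {\<tau>..}"
    using integrable_tail by blast
  have "0 \<le> 1 / f s" if "\<tau> \<le> s" for s
    using that \<tau>(1) pos[of s] by simp
  with \<tau>(2) show ?thesis
    by (rule integrable_on_Ici_extend_nonneg[OF _ _ continuous_on_reciprocal[OF assms]])
qed

lemma Fint_split: "0 < a \<Longrightarrow> a \<le> b \<Longrightarrow> Fint f a = integral {a..b} (\<lambda>s. 1 / f s) + Fint f b"
  unfolding Fint_def
  by (intro integral_Ici_split integrable_continuous_interval continuous_on_reciprocal integrable_reciprocal_Ici) auto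

lemma has_real_derivative_Fint:
  assumes "0 < u"
  shows "(Fint f has_real_derivative - (1 / f u)) (at u)"
proof -
  let ?a = "u / 2" and ?h = "\<lambda>s. 1 / f s"
  have "((\<lambda>x. integral {?a..x} ?h) has_real_derivative ?h u) (at u within {?a..u + 1})"
    using assms continuous_on_reciprocal by (intro integral_has_real_derivative) auto
  moreover have "at u within {?a..u + 1} = at u" using assms by (intro at_within_Icc_at) auto
  ultimately have "((\<lambda>x. Fint f ?a - integral {?a..x} ?h) has_real_derivative - ?h u) (at u)"
    by (auto intro!: derivative_eq_intros)
  then show ?thesis
  proof (rule has_field_derivative_transform_within_open[where S = "{?a<..}"])
    show "Fint f ?a - integral {?a..x} ?h = Fint f x" if "x \<in> {?a<..}" for x
      using that assms Fint_split[of ?a x] by simp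
  qed (use assms in auto)
qed

lemma isCont_Fint: "0 < u \<Longrightarrow> isCont (Fint f) u"
  by (rule DERIV_isCont[OF has_real_derivative_Fint])

lemma Fint_strict_antimono:
  assumes "0 < a" "a < b"
  shows "Fint f b < Fint f a"
proof (rule DERIV_neg_imp_decreasing[OF assms(2)])
  fix x assume "a \<le> x" "x \<le> b"
  with assms have "0 < x" by simp
  then show "\<exists>y. (Fint f has_real_derivative y) (at x) \<and> y < 0"
    using has_real_derivative_Fint pos by (intro exI[of _ "- (1 / f x)"]) simp
qed

lemma Fint_pos:
  assumes "0 < u"
  shows "0 < Fint f u"
proof -
  have "0 \<le> Fint f (u + 1)"
    unfolding Fint_def using \<open>0 < u\<close> pos by (intro integral_nonneg integrable_reciprocal_Ici) (auto intro: less_imp_le)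
  also have "\<dots> < Fint f u" using \<open>0 < u\<close> by (intro Fint_strict_antimono) auto
  finally show ?thesis .
qed

lemma Fint_tendsto_0: "(Fint f \<longlongrightarrow> 0) at_top"
proof -
  have "(\<lambda>s. 1 / f s) absolutely_integrable_on {1..}"
    using pos by (intro nonnegative_absolutely_integrable_1 integrable_reciprocal_Ici) (auto intro: less_imp_le)
  then show ?thesis
    unfolding Fint_def[abs_def] by (rule tendsto_integral_Ici_at_top)
qed

lemma inj_on_Fint: "inj_on (Fint f) {0<..}"
  by (rule inj_onI) (metis Fint_strict_antimono greaterThan_iff less_irrefl linorder_neqE)

lemma Finv_Fint: "0 < u \<Longrightarrow> Finv f (Fint f u) = u"
  unfolding Finv_def by (simp add: inj_on_Fint inv_into_f_f)

lemma Fint_Finv: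
  assumes "0 < T" "0 < y" "y < Fint f T"
  shows "T < Finv f y" "Fint f (Finv f y) = y"
proof -
  obtain u where u: "T \<le> u" "Fint f u < y"
    using eventually_conj[OF eventually_ge_at_top order_tendstoD(2)[OF Fint_tendsto_0 \<open>0 < y\<close>]]
    by (auto simp: eventually_at_top_linorder)
  have "\<forall>x. T \<le> x \<and> x \<le> u \<longrightarrow> isCont (Fint f) x"
    using assms(1) isCont_Fint by simp
  then obtain x where x: "T \<le> x" "Fint f x = y"
    using IVT2[of "Fint f" u y T] u assms(3) by auto
  with assms have "T < x" by (auto simp: order.order_iff_strict)
  then show "T < Finv f y" "Fint f (Finv f y) = y"
    using x assms(1) Finv_Fint by auto
qed

lemma has_real_derivative_Finv:
  assumes T: "0 < T" and y: "0 < y" "y < Fint f T"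
  shows "(Finv f has_real_derivative - f (Finv f y)) (at y)"
proof -
  let ?x = "Finv f y"
  have x: "T < ?x" "Fint f ?x = y" using Fint_Finv[OF T y] by auto
  have "isCont (Finv f) (Fint f ?x)"
  proof (rule isCont_inverse_function2[where f = "Fint f" and a = T and b = "?x + 1"])
    fix z assume "T \<le> z"
    with T have "0 < z" by simp
    then show "Finv f (Fint f z) = z" "isCont (Fint f) z"
      by (simp_all add: Finv_Fint isCont_Fint)
  qed (use x in simp_all)
  then have cont: "isCont (Finv f) y" using x by simp
  have "(Finv f has_real_derivative inverse (- (1 / f ?x))) (at y)"
  proof (rule DERIV_inverse_function[where a = 0 and b = "Fint f T"])
    show "(Fint f has_real_derivative - (1 / f ?x)) (at ?x)"
      using x T by (intro has_real_derivative_Fint) simp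
    show "- (1 / f ?x) \<noteq> 0" using x T pos[of ?x] by simp
    show "Fint f (Finv f z) = z" if "0 < z" "z < Fint f T" for z
      using Fint_Finv[OF T that] by simp
  qed (use y cont in simp_all)
  then show ?thesis by simp
qed

lemma Fint_le_F0:
  assumes "0 < u"
  shows "ereal (Fint f u) \<le> F0 f"
proof -
  have "F0 f = (SUP u\<in>{0<..}. ereal (Fint f u))"
    unfolding F0_def using Fint_strict_antimono
    by (intro tendsto_Lim tendsto_SUP_at_right_antimono) (auto simp: order.order_iff_strict)
  then show ?thesis using assms by (auto intro: SUP_upper)
qed

lemma Finv_antimono:
  assumes T: "0 < T" and ab: "0 < a" "a \<le> b" "b < Fint f T"
  shows "Finv f b \<le> Finv f a"
proof (rule ccontr)
  assume "\<not> Finv f b \<le> Finv f a"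
  moreover have "T < Finv f a" "Fint f (Finv f a) = a" "Fint f (Finv f b) = b"
    using Fint_Finv[OF T] ab by auto
  ultimately have "b < a" using T Fint_strict_antimono[of "Finv f a" "Finv f b"] by simp
  with ab show False by simp
qed

lemma limit_deriv_mult_Fint_ge_1:
  assumes deriv: "\<forall>\<^sub>F u in at_top. (f has_real_derivative f' u) (at u)"
    and lim: "((\<lambda>u. f' u * Fint f u) \<longlongrightarrow> q) at_top"
  shows "1 \<le> q"
proof (rule ccontr)
  assume "\<not> 1 \<le> q"
  define c where "c = (1 + q) / 2"
  have "q < c" "c < 1" using \<open>\<not> 1 \<le> q\<close> by (auto simp: c_def)
  have "\<forall>\<^sub>F u in at_top. 0 < u \<and> (f has_real_derivative f' u) (at u) \<and> f' u * Fint f u < c"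
    using eventually_gt_at_top deriv order_tendstoD(2)[OF lim \<open>q < c\<close>] by (intro eventually_conj)
  then obtain U where U: "\<And>u. U \<le> u \<Longrightarrow>
      0 < u \<and> (f has_real_derivative f' u) (at u) \<and> f' u * Fint f u < c"
    by (auto simp: eventually_at_top_linorder)
  define \<phi> where "\<phi> u = Fint f u * f u + (1 - c) * u" for u
  have \<phi>_antimono: "\<phi> x \<le> \<phi> U" if "U \<le> x" for x
  proof (rule DERIV_nonpos_imp_nonincreasing[OF that])
    fix y assume "U \<le> y"
    with U have y: "0 < y" "(f has_real_derivative f' y) (at y)" "f' y * Fint f y < c" by auto
    have "(\<phi> has_real_derivative - (1 / f y) * f y + Fint f y * f' y + (1 - c)) (at y)"
      unfolding \<phi>_def using y has_real_derivative_Fint[OF y(1)]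
      by (auto intro!: derivative_eq_intros)
    moreover have "- (1 / f y) * f y + Fint f y * f' y + (1 - c) \<le> 0"
      using y pos[of y] by (simp add: mult.commute)
    ultimately show "\<exists>d. (\<phi> has_real_derivative d) (at y) \<and> d \<le> 0" by blast
  qed
  define x where "x = max U (\<phi> U / (1 - c))"
  have "\<phi> U / (1 - c) \<le> x" by (simp add: x_def)
  then have "\<phi> U \<le> (1 - c) * x"
    using \<open>c < 1\<close> by (simp add: pos_divide_le_eq mult.commute)
  moreover have "0 < Fint f x * f x"
    using U[of x] Fint_pos pos by (simp add: x_def)
  ultimately have "\<phi> U < \<phi> x" by (simp add: \<phi>_def)
  with \<phi>_antimono[of x] show False by (simp add: x_def)
qed

lemma mono_on_Fint_powr_mult:
  assumes T: "0 < T"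
    and deriv: "\<And>x. T \<le> x \<Longrightarrow> (f has_real_derivative f' x) (at x)"
    and bound: "\<And>x. T \<le> x \<Longrightarrow> r \<le> f' x * Fint f x"
  shows "mono_on {T..} (\<lambda>u. Fint f u powr r * f u)"
proof (rule mono_onI)
  fix a b assume "a \<in> {T..}" "a \<le> b"
  then show "Fint f a powr r * f a \<le> Fint f b powr r * f b"
  proof (intro DERIV_nonneg_imp_nondecreasing[OF \<open>a \<le> b\<close>])
    fix x assume "a \<le> x"
    with \<open>a \<in> {T..}\<close> T have x: "T \<le> x" "0 < x" by auto
    have F: "0 < Fint f x" using Fint_pos[OF x(2)] .
    have "((\<lambda>u. Fint f u powr r) has_real_derivative
        r * Fint f x powr (r - 1) * (- (1 / f x))) (at x)"
      using DERIV_chain2[OF has_real_derivative_powr[OF F] has_real_derivative_Fint[OF x(2)]] .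
    then have "((\<lambda>u. Fint f u powr r * f u) has_real_derivative
        r * Fint f x powr (r - 1) * (- (1 / f x)) * f x + f' x * Fint f x powr r) (at x)"
      using deriv[OF x(1)] by (rule DERIV_mult)
    moreover have "r * Fint f x powr (r - 1) * (- (1 / f x)) * f x + f' x * Fint f x powr r
        = Fint f x powr (r - 1) * (f' x * Fint f x - r)"
      using F pos[OF x(2)] powr_mult_base[of "Fint f x" "r - 1"] by (simp add: field_simps)
    moreover have "0 \<le> Fint f x powr (r - 1) * (f' x * Fint f x - r)"
      using bound[OF x(1)] by simp
    ultimately show "\<exists>y. ((\<lambda>u. Fint f u powr r * f u) has_real_derivative y) (at x) \<and> 0 \<le> y"
      by auto
  qed
qed

lemma convex_on_Finv_powr:
  assumes T: "0 < T" and k: "0 < k"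
    and deriv: "\<And>x. T \<le> x \<Longrightarrow> (f has_real_derivative f' x) (at x)"
    and bound: "\<And>x. T \<le> x \<Longrightarrow> (k - 1) / k \<le> f' x * Fint f x"
  shows "convex_on {0<..<Fint f T powr (1 / k)} (\<lambda>\<sigma>. Finv f (\<sigma> powr k))"
proof -
  let ?I = "{0<..<Fint f T powr (1 / k)}" and ?r = "(k - 1) / k"
  define \<psi> where "\<psi> u = Fint f u powr ?r * f u" for u
  have \<psi>_mono: "mono_on {T..} \<psi>"
    unfolding \<psi>_def[abs_def] using T deriv bound by (rule mono_on_Fint_powr_mult)
  have range: "0 < \<sigma> powr k" "\<sigma> powr k < Fint f T" if "\<sigma> \<in> ?I" for \<sigma>
  proof -
    have "\<sigma> powr k < (Fint f T powr (1 / k)) powr k"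
      using that k by (intro powr_less_mono2) auto
    also have "\<dots> = Fint f T" using k Fint_pos[OF T] by (simp add: powr_powr)
    finally show "\<sigma> powr k < Fint f T" .
    show "0 < \<sigma> powr k" using that by simp
  qed
  have g_deriv: "((\<lambda>\<sigma>. Finv f (\<sigma> powr k)) has_real_derivative - k * \<psi> (Finv f (\<sigma> powr k))) (at \<sigma>)"
    if \<sigma>: "\<sigma> \<in> ?I" for \<sigma>
  proof -
    let ?y = "\<sigma> powr k"
    have "((\<lambda>\<sigma>. Finv f (\<sigma> powr k)) has_real_derivative
        - f (Finv f ?y) * (k * \<sigma> powr (k - 1))) (at \<sigma>)"
      using \<sigma> range[OF \<sigma>]
      by (intro DERIV_chain2[OF has_real_derivative_Finv[OF T] has_real_derivative_powr]) auto
    moreover have "\<sigma> powr (k - 1) = Fint f (Finv f ?y) powr ?r"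
      using k Fint_Finv(2)[OF T range[OF \<sigma>]] by (simp add: powr_powr)
    ultimately show ?thesis by (simp add: \<psi>_def mult_ac)
  qed
  show ?thesis
  proof (rule convex_on_realI[OF _ g_deriv])
    fix \<sigma> \<tau> assume "\<sigma> \<in> ?I" "\<tau> \<in> ?I" "\<sigma> \<le> \<tau>"
    then have "Finv f (\<tau> powr k) \<le> Finv f (\<sigma> powr k)"
      using k by (intro Finv_antimono[OF T] range powr_mono2) auto
    moreover have "T < Finv f (\<tau> powr k)" using Fint_Finv(1)[OF T range[OF \<open>\<tau> \<in> ?I\<close>]] .
    ultimately have "\<psi> (Finv f (\<tau> powr k)) \<le> \<psi> (Finv f (\<sigma> powr k))"
      by (intro mono_onD[OF \<psi>_mono]) auto
    with k show "- k * \<psi> (Finv f (\<sigma> powr k)) \<le> - k * \<psi> (Finv f (\<tau> powr k))" by simp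
  qed simp
qed

end

theorem lemma3p2:
  fixes f f' :: "real \<Rightarrow> real" and \<tau>0 k q :: real
  assumes nonneg: "\<forall>u\<ge>0. f u \<ge> 0"
    and M_cont: "continuous_on {0..} f"
    and M_mono: "mono_on {0..} f"
    and M_pos: "\<forall>u>0. f u > 0"
    and S_tau: "\<tau>0 > 0"
    and S_deriv: "\<forall>x\<ge>\<tau>0. (f has_real_derivative f' x) (at x within {\<tau>0..})"
    and S_cont: "continuous_on {\<tau>0..} f'"
    and S_int: "(\<lambda>s. 1 / f s) integrable_on {\<tau>0..}"
    and L: "((\<lambda>u. f' u * Fint f u) \<longlongrightarrow> q) at_top"
    and k: "k > 0"
  shows "\<exists>\<sigma>s>0. ereal (\<sigma>s powr k) \<le> F0 f \<and>
           convex_on {0<..<\<sigma>s} (\<lambda>\<sigma>. Finv f (\<sigma> powr k))"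
proof -
  interpret reciprocal_integrable f
  proof
    show "continuous_on {0<..} f" using M_cont by (rule continuous_on_subset) auto
    show "0 < f u" if "0 < u" for u using that M_pos by simp
    show "\<exists>\<tau>>0. (\<lambda>s. 1 / f s) integrable_on {\<tau>..}" using S_tau S_int by blast
  qed
  have deriv: "(f has_real_derivative f' x) (at x)" if "\<tau>0 < x" for x
  proof -
    have "(f has_real_derivative f' x) (at x within {\<tau>0..})" using S_deriv that by simp
    moreover have "at x within {\<tau>0..} = at x" using that by (intro at_within_interior) auto
    ultimately show ?thesis by simp
  qed
  have "\<forall>\<^sub>F u in at_top. (f has_real_derivative f' u) (at u)"
    using eventually_gt_at_top[of \<tau>0] by eventually_elim (rule deriv)
  then have "1 \<le> q" using L by (rule limit_deriv_mult_Fint_ge_1)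
  moreover have "(k - 1) / k < 1" using k by simp
  ultimately have "(k - 1) / k < q" by linarith
  then have "\<forall>\<^sub>F x in at_top. \<tau>0 < x \<and> (k - 1) / k < f' x * Fint f x"
    using order_tendstoD(1)[OF L] by (intro eventually_conj eventually_gt_at_top)
  then obtain T where T: "\<And>x. T \<le> x \<Longrightarrow> \<tau>0 < x \<and> (k - 1) / k < f' x * Fint f x"
    by (auto simp: eventually_at_top_linorder)
  have "0 < T" using T[of T] S_tau by simp
  define \<sigma>s where "\<sigma>s = Fint f T powr (1 / k)"
  have "\<sigma>s powr k = Fint f T" using k Fint_pos[OF \<open>0 < T\<close>] by (simp add: \<sigma>s_def powr_powr)
  moreover have "convex_on {0<..<\<sigma>s} (\<lambda>\<sigma>. Finv f (\<sigma> powr k))"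
    unfolding \<sigma>s_def using \<open>0 < T\<close> k T deriv
    by (intro convex_on_Finv_powr) (auto intro: less_imp_le)
  ultimately show ?thesis
    using Fint_pos[OF \<open>0 < T\<close>] Fint_le_F0[OF \<open>0 < T\<close>] by (intro exI[of _ \<sigma>s]) (simp add: \<sigma>s_def)
qed

end
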